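(* Let $F_1,F_2\colon \mathbb{R}^n \rightrightarrows \mathbb{R}^m$ be nearly convex set-valued mappings and $\varepsilon\ge 0$. Suppose that $$\mathrm{ri}(\mathrm{dom}\, F_1) \cap \mathrm{ri}(\mathrm{dom}\, F_2) \neq\emptyset .$$ Let $(\bar x,\bar y)\in\mathrm{gph}(F_1+F_2)$, where $(F_1+F_2)(x)=F_1(x)+F_2(x)$, and let $S(\bar x, \bar y)=\{(\bar y_1, \bar y_2) \in \mathbb{R}^m \times \mathbb{R}^m \mid \bar y=\bar y_1 +\bar y_2,\ \bar y_i\in F_i(\bar x),\ i=1,2 \}$. Then for every $v\in \mathbb{R}^m$ and every $(\bar y_1, \bar y_2) \in S(\bar x, \bar y)$, $$D^*_\varepsilon(F_1+F_2)(\bar x, \bar y)(v)=\bigcup_{\substack{\varepsilon_1\geq 0,\ \varepsilon_2\geq 0,\\ \varepsilon_1+\varepsilon_2=\varepsilon}}\big[D^*_{\varepsilon_1} F_1(\bar x, \bar y_1)(v)+D^*_{\varepsilon_2}F_2 (\bar x, \bar y_2)(v)\big].$$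
   Context: A set $D$ is nearly convex if there is a convex $E$ with $E\subset D\subset\overline{E}$. A set-valued mapping $F\colon\mathbb{R}^n\rightrightarrows\mathbb{R}^m$ has domain $\mathrm{dom}\,F=\{x\mid F(x)\ne\emptyset\}$ and graph $\mathrm{gph}\,F=\{(x,y)\mid y\in F(x)\}$; it is nearly convex if its graph is nearly convex. $\mathrm{ri}\,D=\{a\in D\mid\exists\delta>0,\ B(a;\delta)\cap\mathrm{aff}\,D\subset D\}$. For nonempty $\Omega$, $\bar z\in\Omega$, $\varepsilon\ge0$: $N_\varepsilon(\bar z;\Omega)=\{\xi\mid\langle\xi,z-\bar z\rangle\le\varepsilon\ \forall z\in\Omega\}$. For $(\bar x,\bar y)\in\mathrm{gph}\,F$, the $\varepsilon$-coderivative is $D^*_\varepsilon F(\bar x,\bar y)(v)=\{u\in\mathbb{R}^n\mid(u,-v)\in N_\varepsilon((\bar x,\bar y);\mathrm{gph}\,F)\}$. Sums of sets are Minkowski sums. *)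

theory Defs
  imports "HOL-Analysis.Analysis"
begin

definition nearly_convex :: "'a::real_normed_vector set \<Rightarrow> bool" where
  "nearly_convex D \<longleftrightarrow> (\<exists>E. convex E \<and> E \<subseteq> D \<and> D \<subseteq> closure E)"

definition gph :: "('a \<Rightarrow> 'b set) \<Rightarrow> ('a \<times> 'b) set" where
  "gph F = {(x, y). y \<in> F x}"

definition sv_dom :: "('a \<Rightarrow> 'b set) \<Rightarrow> 'a set" where
  "sv_dom F = {x. F x \<noteq> {}}"

definition nearly_convex_map :: "('a::real_normed_vector \<Rightarrow> 'b::real_normed_vector set) \<Rightarrow> bool" where
  "nearly_convex_map F \<longleftrightarrow> nearly_convex (gph F)"

definition eps_normal :: "real \<Rightarrow> 'a::real_inner \<Rightarrow> 'a set \<Rightarrow> 'a set" where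
  "eps_normal \<epsilon> zbar \<Omega> = {\<xi>. \<forall>z\<in>\<Omega>. inner \<xi> (z - zbar) \<le> \<epsilon>}"

definition eps_coderiv ::
  "real \<Rightarrow> ('a::real_inner \<Rightarrow> 'b::real_inner set) \<Rightarrow> 'a \<Rightarrow> 'b \<Rightarrow> 'b \<Rightarrow> 'a set" where
  "eps_coderiv \<epsilon> F xbar ybar v = {u. (u, - v) \<in> eps_normal \<epsilon> (xbar, ybar) (gph F)}"

definition sv_sum :: "('a \<Rightarrow> 'b::plus set) \<Rightarrow> ('a \<Rightarrow> 'b set) \<Rightarrow> 'a \<Rightarrow> 'b set" where
  "sv_sum F1 F2 x = {y1 + y2 | y1 y2. y1 \<in> F1 x \<and> y2 \<in> F2 x}"

definition mink_sum :: "'a::plus set \<Rightarrow> 'a set \<Rightarrow> 'a set" where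
  "mink_sum A B = {a + b | a b. a \<in> A \<and> b \<in> B}"

definition S_set :: "('a \<Rightarrow> 'b::plus set) \<Rightarrow> ('a \<Rightarrow> 'b set) \<Rightarrow> 'a \<Rightarrow> 'b \<Rightarrow> ('b \<times> 'b) set" where
  "S_set F1 F2 xbar ybar = {(y1, y2). ybar = y1 + y2 \<and> y1 \<in> F1 xbar \<and> y2 \<in> F2 xbar}"

end

(*
  The inclusion from right to left is elementary. Conversely, let u lie in the
  eps-coderivative of F1 + F2 and pick convex E_i with E_i \<subseteq> gph F_i \<subseteq> closure E_i.
  Membership of u says that the affine function
    \<phi>(x1, z1) + \<psi>(x2, z2) = \<epsilon> - <u, x1 - xbar> + <v, z1 - y1> + <v, z2 - y2>
  is nonnegative on the diagonal x1 = x2 of E1 \<times> E2. Properly separating the convex set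
  {(x1 - x2, t) | t > \<phi> + \<psi>} from the origin gives a multiplier (w, c) with c \<ge> 0, and
  c = 0 would properly separate the projections of E1 and E2, impossible because their
  relative interiors meet. With W = w / c we get <W, x1 - x2> + \<phi> + \<psi> \<ge> 0 on E1 \<times> E2,
  hence by continuity on gph F1 \<times> gph F2. The two variables now decouple: taking
  e = sup over gph F1 of the first part splits u = (u - W) + W with tolerances e and \<epsilon> - e.
*)

theory Submission
  imports Defs
begin

lemma separating_hyperplane_set_0_proper:
  fixes S :: "'a::euclidean_space set"
  assumes "convex S" "S \<noteq> {}" "0 \<notin> S"
  obtains a where "\<And>x. x \<in> S \<Longrightarrow> 0 \<le> a \<bullet> x" "\<exists>x\<in>S. 0 < a \<bullet> x"
proof -
  obtain a where a: "a \<in> span S" "a \<noteq> 0" "\<And>x. x \<in> S \<Longrightarrow> 0 \<le> a \<bullet> x"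
    using separating_hyperplane_set_0_inspan[OF assms] by blast
  have "\<exists>x\<in>S. 0 < a \<bullet> x"
  proof (rule ccontr)
    assume "\<not> ?thesis"
    with a(3) have "\<And>x. x \<in> S \<Longrightarrow> orthogonal a x"
      by (force simp: orthogonal_def)
    then have "orthogonal a a"
      using orthogonal_to_span[OF a(1)] by blast
    with a(2) show False by (simp add: orthogonal_def)
  qed
  with a(3) that show ?thesis by blast
qed

lemma inner_const_if_min_at_rel_interior:
  fixes S :: "'a::euclidean_space set"
  assumes "convex S" and z: "z \<in> rel_interior S"
    and min: "\<And>y. y \<in> S \<Longrightarrow> a \<bullet> z \<le> a \<bullet> y" and "x \<in> S"
  shows "a \<bullet> x = a \<bullet> z"
proof -
  obtain e where "e > 1" "(1 - e) *\<^sub>R x + e *\<^sub>R z \<in> S"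
    using convex_rel_interior_iff[OF \<open>convex S\<close>] z \<open>x \<in> S\<close> by blast
  from min[OF this(2)] have "0 \<le> (1 - e) * (a \<bullet> x - a \<bullet> z)"
    by (simp add: algebra_simps)
  with \<open>e > 1\<close> have "a \<bullet> x \<le> a \<bullet> z"
    by (simp add: zero_le_mult_iff)
  with min[OF \<open>x \<in> S\<close>] show ?thesis by simp
qed

lemma separating_inner_eq_if_rel_interiors_meet:
  fixes S T :: "'a::euclidean_space set"
  assumes "convex S" "convex T" "rel_interior S \<inter> rel_interior T \<noteq> {}"
    and sep: "\<And>x y. x \<in> S \<Longrightarrow> y \<in> T \<Longrightarrow> a \<bullet> y \<le> a \<bullet> x"
    and "x \<in> S" "y \<in> T"
  shows "a \<bullet> x = a \<bullet> y"
proof -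
  obtain z where zS: "z \<in> rel_interior S" and zT: "z \<in> rel_interior T"
    using assms(3) by blast
  have "a \<bullet> x = a \<bullet> z"
    using inner_const_if_min_at_rel_interior[OF \<open>convex S\<close> zS] sep rel_interior_subset zT \<open>x \<in> S\<close>
    by blast
  moreover have "(- a) \<bullet> y = (- a) \<bullet> z"
    using inner_const_if_min_at_rel_interior[OF \<open>convex T\<close> zT] sep rel_interior_subset zS \<open>y \<in> T\<close>
    by (metis inner_minus_left neg_le_iff_le subsetD)
  ultimately show ?thesis by simp
qed

lemma rel_interior_subset_if_between_closure:
  fixes D :: "'a::euclidean_space set"
  assumes "convex E" "E \<subseteq> D" "D \<subseteq> closure E"
  shows "rel_interior D \<subseteq> rel_interior E"
proof -
  have "affine hull D = affine hull (closure E)"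
    using hull_mono[OF assms(2), of affine] hull_mono[OF assms(3), of affine]
      closure_same_affine_hull by blast
  then have "rel_interior D \<subseteq> rel_interior (closure E)"
    using subset_rel_interior[OF assms(3)] by blast
  also have "\<dots> = rel_interior E"
    by (rule convex_rel_interior_closure[OF assms(1)])
  finally show ?thesis .
qed

lemma nonneg_if_nonneg_on_positive_reals:
  fixes a c :: real
  assumes "\<And>s. 0 < s \<Longrightarrow> 0 \<le> a + c * s"
  shows "0 \<le> c" "0 \<le> a"
proof -
  show "0 \<le> c"
  proof (rule ccontr)
    assume "\<not> 0 \<le> c"
    then have "0 < (\<bar>a\<bar> + 1) / - c" and "c * ((\<bar>a\<bar> + 1) / - c) = - (\<bar>a\<bar> + 1)"
      by (simp_all add: divide_less_0_iff)
    moreover from assms[OF this(1)] have "0 \<le> a + c * ((\<bar>a\<bar> + 1) / - c)" .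
    ultimately show False by linarith
  qed
  show "0 \<le> a"
  proof (rule field_le_epsilon)
    fix e :: real assume "0 < e"
    show "0 \<le> a + e"
    proof (cases "c = 0")
      case True then show ?thesis using assms[of 1] \<open>0 < e\<close> by simp
    next
      case False
      with \<open>0 \<le> c\<close> \<open>0 < e\<close> have "0 < e / c" by simp
      from assms[OF this] False show ?thesis by simp
    qed
  qed
qed

lemma bounded_sum_split:
  fixes f g :: "'a \<Rightarrow> real"
  assumes "P \<noteq> {}" "Q \<noteq> {}" and le: "\<And>p q. p \<in> P \<Longrightarrow> q \<in> Q \<Longrightarrow> f p + g q \<le> c"
  obtains e where "\<And>p. p \<in> P \<Longrightarrow> f p \<le> e" "\<And>q. q \<in> Q \<Longrightarrow> g q \<le> c - e"
proof
  obtain q0 where "q0 \<in> Q" using assms(2) by blast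
  then have "bdd_above (f ` P)"
    using le by (intro bdd_aboveI2[where M = "c - g q0"]) (auto simp: algebra_simps)
  then show "f p \<le> (SUP p\<in>P. f p)" if "p \<in> P" for p
    using cSUP_upper[OF that] by blast
  show "g q \<le> c - (SUP p\<in>P. f p)" if "q \<in> Q" for q
    using cSUP_least[OF assms(1), of f "c - g q"] le[OF _ that] by (simp add: algebra_simps)
qed

lemma convex_coupling_multiplier:
  fixes A :: "('a::euclidean_space \<times> 'b::real_vector) set" and B :: "('a \<times> 'c::real_vector) set"
  assumes \<phi>: "convex_on A \<phi>" and \<psi>: "convex_on B \<psi>"
    and ri: "rel_interior (fst ` A) \<inter> rel_interior (fst ` B) \<noteq> {}"
    and diag: "\<And>p q. p \<in> A \<Longrightarrow> q \<in> B \<Longrightarrow> fst p = fst q \<Longrightarrow> 0 \<le> \<phi> p + \<psi> q"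
  obtains w where "\<And>p q. p \<in> A \<Longrightarrow> q \<in> B \<Longrightarrow> 0 \<le> w \<bullet> (fst p - fst q) + \<phi> p + \<psi> q"
proof -
  define K where "K = {(fst p - fst q, t) | p q t. p \<in> A \<and> q \<in> B \<and> \<phi> p + \<psi> q < t}"
  have K_I: "(fst p - fst q, t) \<in> K" if "p \<in> A" "q \<in> B" "\<phi> p + \<psi> q < t" for p q t
    using that unfolding K_def by blast
  have "convex K"
  proof (rule convexI)
    fix k k' :: "'a \<times> real" and u v :: real
    assume "k \<in> K" "k' \<in> K" and uv: "0 \<le> u" "0 \<le> v" "u + v = 1"
    then obtain p q t p' q' t' where
      pq: "p \<in> A" "q \<in> B" "\<phi> p + \<psi> q < t" "k = (fst p - fst q, t)" and
      pq': "p' \<in> A" "q' \<in> B" "\<phi> p' + \<psi> q' < t'" "k' = (fst p' - fst q', t')"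
      unfolding K_def by blast
    have in_AB: "u *\<^sub>R p + v *\<^sub>R p' \<in> A" "u *\<^sub>R q + v *\<^sub>R q' \<in> B"
      using \<phi> \<psi> pq pq' uv by (simp_all add: convex_on_def convexD)
    have "\<phi> (u *\<^sub>R p + v *\<^sub>R p') \<le> u * \<phi> p + v * \<phi> p'"
      using \<phi> pq(1) pq'(1) uv unfolding convex_on_def by blast
    moreover have "\<psi> (u *\<^sub>R q + v *\<^sub>R q') \<le> u * \<psi> q + v * \<psi> q'"
      using \<psi> pq(2) pq'(2) uv unfolding convex_on_def by blast
    moreover have "u * (\<phi> p + \<psi> q) + v * (\<phi> p' + \<psi> q') < u * t + v * t'"
    proof (cases "u = 0")
      case True
      with uv pq'(3) show ?thesis by simp
    next
      case False
      with uv pq(3) pq'(3) have "u * (\<phi> p + \<psi> q) < u * t" "v * (\<phi> p' + \<psi> q') \<le> v * t'"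
        by (simp_all add: mult_left_mono)
      then show ?thesis by linarith
    qed
    ultimately have "\<phi> (u *\<^sub>R p + v *\<^sub>R p') + \<psi> (u *\<^sub>R q + v *\<^sub>R q') < u * t + v * t'"
      by (simp add: algebra_simps)
    from K_I[OF in_AB this] show "u *\<^sub>R k + v *\<^sub>R k' \<in> K"
      by (simp add: pq(4) pq'(4) algebra_simps)
  qed
  moreover obtain p0 q0 where "p0 \<in> A" "q0 \<in> B"
    using ri rel_interior_subset by blast
  then have "K \<noteq> {}"
    using K_I[of p0 q0 "\<phi> p0 + \<psi> q0 + 1"] by auto
  moreover have "0 \<notin> K"
    using diag by (fastforce simp: K_def zero_prod_def)
  ultimately obtain wc where sep: "\<And>k. k \<in> K \<Longrightarrow> 0 \<le> wc \<bullet> k" and proper: "\<exists>k\<in>K. 0 < wc \<bullet> k"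
    by (rule separating_hyperplane_set_0_proper) blast
  obtain w c where wc: "wc = (w, c)" by fastforce
  have shifted: "0 \<le> w \<bullet> (fst p - fst q) + c * (\<phi> p + \<psi> q) + c * s"
    if "p \<in> A" "q \<in> B" "0 < s" for p q s
    using sep[OF K_I[OF that(1,2), of "\<phi> p + \<psi> q + s"]] that(3) by (simp add: wc algebra_simps)
  have c_ge: "0 \<le> c"
    using nonneg_if_nonneg_on_positive_reals(1)[OF shifted[OF \<open>p0 \<in> A\<close> \<open>q0 \<in> B\<close>]] .
  have w_c: "0 \<le> w \<bullet> (fst p - fst q) + c * (\<phi> p + \<psi> q)" if "p \<in> A" "q \<in> B" for p q
    using nonneg_if_nonneg_on_positive_reals(2)[OF shifted[OF that]] .
  have "c \<noteq> 0"
  proof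
    assume "c = 0"
    with w_c have "w \<bullet> x' \<le> w \<bullet> x" if "x \<in> fst ` A" "x' \<in> fst ` B" for x x'
      using that by (force simp: inner_diff_right)
    then have "w \<bullet> x = w \<bullet> x'" if "x \<in> fst ` A" "x' \<in> fst ` B" for x x'
      using separating_inner_eq_if_rel_interiors_meet[OF _ _ ri] that \<phi> \<psi>
      by (metis convex_linear_image convex_on_imp_convex linear_fst)
    with proper \<open>c = 0\<close> show False
      by (force simp: K_def wc inner_diff_right)
  qed
  with c_ge have "0 < c" by simp
  show ?thesis
  proof
    fix p q assume "p \<in> A" "q \<in> B"
    have "(w /\<^sub>R c) \<bullet> (fst p - fst q) + \<phi> p + \<psi> q
        = (w \<bullet> (fst p - fst q) + c * (\<phi> p + \<psi> q)) / c"
      using \<open>0 < c\<close> by (simp add: field_simps)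
    with w_c[OF \<open>p \<in> A\<close> \<open>q \<in> B\<close>] \<open>0 < c\<close>
    show "0 \<le> (w /\<^sub>R c) \<bullet> (fst p - fst q) + \<phi> p + \<psi> q"
      by simp
  qed
qed

lemma eps_coderiv_iff:
  "u \<in> eps_coderiv \<epsilon> F x y v \<longleftrightarrow> (\<forall>x' y'. y' \<in> F x' \<longrightarrow> u \<bullet> (x' - x) - v \<bullet> (y' - y) \<le> \<epsilon>)"
  by (auto simp: eps_coderiv_def eps_normal_def gph_def)

lemma mink_sum_eps_coderiv_subset:
  "mink_sum (eps_coderiv \<epsilon>1 F1 x y1 v) (eps_coderiv \<epsilon>2 F2 x y2 v)
    \<subseteq> eps_coderiv (\<epsilon>1 + \<epsilon>2) (sv_sum F1 F2) x (y1 + y2) v"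
proof
  fix u assume "u \<in> mink_sum (eps_coderiv \<epsilon>1 F1 x y1 v) (eps_coderiv \<epsilon>2 F2 x y2 v)"
  then obtain u1 u2 where "u = u1 + u2" and
    u1: "u1 \<in> eps_coderiv \<epsilon>1 F1 x y1 v" and u2: "u2 \<in> eps_coderiv \<epsilon>2 F2 x y2 v"
    by (auto simp: mink_sum_def)
  show "u \<in> eps_coderiv (\<epsilon>1 + \<epsilon>2) (sv_sum F1 F2) x (y1 + y2) v"
    unfolding eps_coderiv_iff
  proof (intro allI impI)
    fix x' y' assume "y' \<in> sv_sum F1 F2 x'"
    then obtain z1 z2 where "y' = z1 + z2" "z1 \<in> F1 x'" "z2 \<in> F2 x'"
      by (auto simp: sv_sum_def)
    with u1 u2 have "u1 \<bullet> (x' - x) - v \<bullet> (z1 - y1) \<le> \<epsilon>1" "u2 \<bullet> (x' - x) - v \<bullet> (z2 - y2) \<le> \<epsilon>2"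
      by (simp_all add: eps_coderiv_iff)
    with \<open>u = u1 + u2\<close> \<open>y' = z1 + z2\<close>
    show "u \<bullet> (x' - x) - v \<bullet> (y' - (y1 + y2)) \<le> \<epsilon>1 + \<epsilon>2"
      by (simp add: inner_diff_right inner_add_right inner_add_left)
  qed
qed

lemma rel_interior_sv_dom_subset:
  fixes F :: "'a::euclidean_space \<Rightarrow> 'b::euclidean_space set"
  assumes "convex E" "E \<subseteq> gph F" "gph F \<subseteq> closure E"
  shows "rel_interior (sv_dom F) \<subseteq> rel_interior (fst ` E)"
proof (rule rel_interior_subset_if_between_closure)
  have dom: "sv_dom F = fst ` gph F"
    by (force simp: sv_dom_def gph_def)
  show "convex (fst ` E)"
    using assms(1) by (rule convex_linear_image[OF linear_fst])
  show "fst ` E \<subseteq> sv_dom F"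
    using assms(2) dom by blast
  show "sv_dom F \<subseteq> closure (fst ` E)"
    using dom assms(3) closure_linear_image_subset[OF linear_fst, of E] by blast
qed

lemma eps_coderiv_sv_sum_split:
  fixes F1 F2 :: "'a::euclidean_space \<Rightarrow> 'b::euclidean_space set"
  assumes "nearly_convex_map F1" "nearly_convex_map F2"
    and ri: "rel_interior (sv_dom F1) \<inter> rel_interior (sv_dom F2) \<noteq> {}"
    and y1: "y1 \<in> F1 x" and y2: "y2 \<in> F2 x"
    and u: "u \<in> eps_coderiv \<epsilon> (sv_sum F1 F2) x (y1 + y2) v"
  obtains \<epsilon>1 \<epsilon>2 where "0 \<le> \<epsilon>1" "0 \<le> \<epsilon>2" "\<epsilon>1 + \<epsilon>2 = \<epsilon>"
    "u \<in> mink_sum (eps_coderiv \<epsilon>1 F1 x y1 v) (eps_coderiv \<epsilon>2 F2 x y2 v)"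
proof -
  obtain E1 where E1: "convex E1" "E1 \<subseteq> gph F1" "gph F1 \<subseteq> closure E1"
    using assms(1) by (auto simp: nearly_convex_map_def nearly_convex_def)
  obtain E2 where E2: "convex E2" "E2 \<subseteq> gph F2" "gph F2 \<subseteq> closure E2"
    using assms(2) by (auto simp: nearly_convex_map_def nearly_convex_def)
  define \<phi> where "\<phi> p = \<epsilon> - u \<bullet> (fst p - x) + v \<bullet> (snd p - y1)" for p
  define \<psi> :: "'a \<times> 'b \<Rightarrow> real" where "\<psi> q = v \<bullet> (snd q - y2)" for q
  have "convex_on E1 \<phi>"
    using E1(1) unfolding \<phi>_def by (intro convex_onI) (simp_all add: algebra_simps)
  moreover have "convex_on E2 \<psi>"
    using E2(1) unfolding \<psi>_def by (intro convex_onI) (simp_all add: algebra_simps)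
  moreover have "rel_interior (fst ` E1) \<inter> rel_interior (fst ` E2) \<noteq> {}"
    using ri rel_interior_sv_dom_subset[OF E1] rel_interior_sv_dom_subset[OF E2] by blast
  moreover have "0 \<le> \<phi> p + \<psi> q" if "p \<in> E1" "q \<in> E2" "fst p = fst q" for p q
  proof -
    have "snd p + snd q \<in> sv_sum F1 F2 (fst p)"
      using that E1(2) E2(2) by (force simp: sv_sum_def gph_def)
    with u have "u \<bullet> (fst p - x) - v \<bullet> (snd p + snd q - (y1 + y2)) \<le> \<epsilon>"
      by (simp add: eps_coderiv_iff)
    then show ?thesis
      by (simp add: \<phi>_def \<psi>_def algebra_simps)
  qed
  ultimately obtain W where W: "\<And>p q. p \<in> E1 \<Longrightarrow> q \<in> E2 \<Longrightarrow> 0 \<le> W \<bullet> (fst p - fst q) + \<phi> p + \<psi> q"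
    using convex_coupling_multiplier by metis
  have W_gph: "0 \<le> W \<bullet> (fst p - fst q) + \<phi> p + \<psi> q" if "p \<in> gph F1" "q \<in> gph F2" for p q
  proof -
    have cont: "continuous_on (closure (E1 \<times> E2)) (\<lambda>(p, q). W \<bullet> (fst p - fst q) + \<phi> p + \<psi> q)"
      unfolding \<phi>_def \<psi>_def case_prod_unfold by (intro continuous_intros)
    have "(p, q) \<in> closure (E1 \<times> E2)"
      using that E1(3) E2(3) by (auto simp: closure_Times)
    from continuous_ge_on_closure[OF cont this, of 0]
    have "0 \<le> (\<lambda>(p, q). W \<bullet> (fst p - fst q) + \<phi> p + \<psi> q) (p, q)"
      by (auto intro: W)
    then show ?thesis by simp
  qed
  have "((u - W) \<bullet> (fst p - x) - v \<bullet> (snd p - y1)) + (W \<bullet> (fst q - x) - v \<bullet> (snd q - y2)) \<le> \<epsilon>"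
    if "p \<in> gph F1" "q \<in> gph F2" for p q
    using W_gph[OF that] by (simp add: \<phi>_def \<psi>_def algebra_simps)
  with y1 y2 obtain e where
    e1: "\<And>p. p \<in> gph F1 \<Longrightarrow> (u - W) \<bullet> (fst p - x) - v \<bullet> (snd p - y1) \<le> e" and
    e2: "\<And>q. q \<in> gph F2 \<Longrightarrow> W \<bullet> (fst q - x) - v \<bullet> (snd q - y2) \<le> \<epsilon> - e"
    by (elim bounded_sum_split[of "gph F1" "gph F2", rotated 2]) (auto simp: gph_def)
  show ?thesis
  proof
    show "0 \<le> e" "0 \<le> \<epsilon> - e"
      using e1[of "(x, y1)"] e2[of "(x, y2)"] y1 y2 by (auto simp: gph_def)
    have "u - W \<in> eps_coderiv e F1 x y1 v" "W \<in> eps_coderiv (\<epsilon> - e) F2 x y2 v"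
      using e1 e2 by (auto simp: eps_coderiv_iff gph_def)
    then show "u \<in> mink_sum (eps_coderiv e F1 x y1 v) (eps_coderiv (\<epsilon> - e) F2 x y2 v)"
      unfolding mink_sum_def by force
  qed simp
qed

theorem mainTheorem6:
  fixes F1 F2 :: "'n::euclidean_space \<Rightarrow> 'm::euclidean_space set"
    and \<epsilon> :: real and xbar :: 'n and ybar y1 y2 v :: 'm
  assumes "nearly_convex_map F1" and "nearly_convex_map F2"
    and "\<epsilon> \<ge> 0"
    and "rel_interior (sv_dom F1) \<inter> rel_interior (sv_dom F2) \<noteq> {}"
    and "(xbar, ybar) \<in> gph (sv_sum F1 F2)"
    and "(y1, y2) \<in> S_set F1 F2 xbar ybar"
  shows "eps_coderiv \<epsilon> (sv_sum F1 F2) xbar ybar v =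
    (\<Union>(\<epsilon>1, \<epsilon>2) \<in> {(e1, e2). e1 \<ge> 0 \<and> e2 \<ge> 0 \<and> e1 + e2 = \<epsilon>}.
        mink_sum (eps_coderiv \<epsilon>1 F1 xbar y1 v) (eps_coderiv \<epsilon>2 F2 xbar y2 v))"
proof -
  have ybar: "ybar = y1 + y2" and y1: "y1 \<in> F1 xbar" and y2: "y2 \<in> F2 xbar"
    using assms(6) by (auto simp: S_set_def)
  have "u \<in> (\<Union>(\<epsilon>1, \<epsilon>2) \<in> {(e1, e2). e1 \<ge> 0 \<and> e2 \<ge> 0 \<and> e1 + e2 = \<epsilon>}.
      mink_sum (eps_coderiv \<epsilon>1 F1 xbar y1 v) (eps_coderiv \<epsilon>2 F2 xbar y2 v))"
    if "u \<in> eps_coderiv \<epsilon> (sv_sum F1 F2) xbar ybar v" for u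
    using eps_coderiv_sv_sum_split[OF assms(1,2,4) y1 y2, of u] that unfolding ybar by blast
  with mink_sum_eps_coderiv_subset[of _ F1 xbar y1 v _ F2 y2] show ?thesis
    unfolding ybar by fastforce
qed

end
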